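(* Every U(1)-invariant operation $\mathcal{E}$ on $\mathcal{H}'$ admits a Kraus decomposition $\{K_{k,\alpha}\}$, with $k\in\mathbb{Z}$ and $\alpha$ an integer (multiplicity) index, such that $$K_{k,\alpha}=S_k\tilde K_{k,\alpha},\qquad \tilde K_{k,\alpha}=\sum_{n}c^{(k,\alpha)}_n|n\rangle\langle n|,\qquad S_k=\sum_{n=\max\{0,-k\}}^{\infty}|n+k\rangle\langle n|,$$ for some complex coefficients $c_n^{(k,\alpha)}$. Thus $\tilde K_{k,\alpha}$ changes the relative amplitudes of the number states (possibly eliminating some) and $S_k$ shifts the number upward by $k$ (downward by $|k|$ if $k<0$). The coefficients satisfy $\sum_{k,\alpha}|c_n^{(k,\alpha)}|^2\le 1$ for all $n$, with equality for all $n$ if $\mathcal{E}$ is trace-preserving.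
   Context: Let $\mathcal{H}'$ be the Hilbert space with orthonormal basis $\{|n\rangle: n=0,1,2,\dots\}$, let $\hat N=\sum_n n|n\rangle\langle n|$, and let U(1) act by $T(\phi)=e^{i\phi\hat N}$, $\phi\in[0,2\pi)$. A U(1)-invariant operation is a completely positive, trace-nonincreasing linear map $\mathcal{E}$ on (trace-class) operators on $\mathcal{H}'$ such that $\mathcal{E}(T(\phi)XT(\phi)^\dagger)=T(\phi)\mathcal{E}(X)T(\phi)^\dagger$ for all $\phi$ and all $X$. A Kraus decomposition of $\mathcal{E}$ is a family of operators $\{K_i\}$ with $\mathcal{E}(X)=\sum_iK_iXK_i^\dagger$. *)

theory Defs
  imports "HOL-Analysis.Analysis"
begin

text \<open>Operators on H' = l2(N) are represented by their matrix elements
  A m n = <m|A|n> with respect to the orthonormal basis {|n>}.\<close>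

type_synonym mat = "nat \<Rightarrow> nat \<Rightarrow> complex"

definition mat_mult :: "mat \<Rightarrow> mat \<Rightarrow> mat" where
  "mat_mult A B = (\<lambda>i j. \<Sum>\<^sub>\<infinity>p. A i p * B p j)"

definition mat_adj :: "mat \<Rightarrow> mat" where
  "mat_adj A = (\<lambda>i j. cnj (A j i))"

definition mat_add :: "mat \<Rightarrow> mat \<Rightarrow> mat" where
  "mat_add A B = (\<lambda>i j. A i j + B i j)"

definition mat_scale :: "complex \<Rightarrow> mat \<Rightarrow> mat" where
  "mat_scale a A = (\<lambda>i j. a * A i j)"

definition hilbert_schmidt :: "mat \<Rightarrow> bool" where
  "hilbert_schmidt A \<longleftrightarrow> (\<lambda>(i,j). (cmod (A i j))\<^sup>2) summable_on UNIV"

definition trace_class :: "mat \<Rightarrow> bool" where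
  "trace_class A \<longleftrightarrow> (\<exists>B C. hilbert_schmidt B \<and> hilbert_schmidt C \<and> A = mat_mult B C)"

definition mat_trace :: "mat \<Rightarrow> complex" where
  "mat_trace A = (\<Sum>\<^sub>\<infinity>i. A i i)"

text \<open>Positivity (tested on finitely supported vectors; for bounded operators
  this is equivalent to positivity on all of H').\<close>
definition positive_op :: "mat \<Rightarrow> bool" where
  "positive_op A \<longleftrightarrow> (\<forall>F v. finite F \<longrightarrow>
     (let s = (\<Sum>i\<in>F. \<Sum>j\<in>F. cnj (v i) * A i j * v j) in Im s = 0 \<and> 0 \<le> Re s))"

text \<open>Positivity of an N x N block operator matrix (X i j), i.e. an operator on
  C^N (x) H'.\<close>
definition positive_block :: "nat \<Rightarrow> (nat \<Rightarrow> nat \<Rightarrow> mat) \<Rightarrow> bool" where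
  "positive_block N X \<longleftrightarrow> (\<forall>F (v :: nat \<Rightarrow> nat \<Rightarrow> complex). finite F \<longrightarrow>
     (let s = (\<Sum>i<N. \<Sum>j<N. \<Sum>p\<in>F. \<Sum>q\<in>F. cnj (v i p) * X i j p q * v j q)
      in Im s = 0 \<and> 0 \<le> Re s))"

definition operation :: "(mat \<Rightarrow> mat) \<Rightarrow> bool" where
  "operation E \<longleftrightarrow>
     (\<forall>X. trace_class X \<longrightarrow> trace_class (E X)) \<and>
     (\<forall>A B a b. trace_class A \<longrightarrow> trace_class B \<longrightarrow>
        E (mat_add (mat_scale a A) (mat_scale b B)) = mat_add (mat_scale a (E A)) (mat_scale b (E B))) \<and>
     (\<forall>N X. (\<forall>i j. trace_class (X i j)) \<longrightarrow> positive_block N X \<longrightarrow>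
        positive_block N (\<lambda>i j. E (X i j))) \<and>
     (\<forall>X. trace_class X \<longrightarrow> positive_op X \<longrightarrow> Re (mat_trace (E X)) \<le> Re (mat_trace X))"

definition trace_preserving :: "(mat \<Rightarrow> mat) \<Rightarrow> bool" where
  "trace_preserving E \<longleftrightarrow> (\<forall>X. trace_class X \<longrightarrow> mat_trace (E X) = mat_trace X)"

text \<open>Conjugation by T(phi) = exp(i phi N): matrix element (m,n) gets the phase
  exp(i phi (m - n)).\<close>
definition U1_conj :: "real \<Rightarrow> mat \<Rightarrow> mat" where
  "U1_conj \<phi> X = (\<lambda>m n. exp (\<i> * complex_of_real (\<phi> * (real m - real n))) * X m n)"

definition U1_invariant :: "(mat \<Rightarrow> mat) \<Rightarrow> bool" where
  "U1_invariant E \<longleftrightarrow> (\<forall>\<phi> X. 0 \<le> \<phi> \<longrightarrow> \<phi> < 2 * pi \<longrightarrow> trace_class X \<longrightarrow>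
      E (U1_conj \<phi> X) = U1_conj \<phi> (E X))"

definition shift_op :: "int \<Rightarrow> mat" where
  "shift_op k = (\<lambda>m n. if int m = int n + k then 1 else 0)"

definition diag_op :: "(nat \<Rightarrow> complex) \<Rightarrow> mat" where
  "diag_op c = (\<lambda>m n. if m = n then c n else 0)"

definition kraus_term :: "mat \<Rightarrow> mat \<Rightarrow> mat" where
  "kraus_term K X = mat_mult (mat_mult K X) (mat_adj K)"

end

theory Submission
  imports Defs
begin

text \<open>
  U(1)-invariance confines \<open>E(|p\<rangle>\<langle>q|)\<close> to the band \<open>m - n = p - q\<close>. So for every
  shift \<open>k\<close> the entries \<open>\<langle>p+k| E(|p\<rangle>\<langle>q|) |q+k\<rangle>\<close> form a matrix \<open>M\<^sub>k\<close>, positive by complete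
  positivity, and an infinite Cholesky factorisation
  \<open>M\<^sub>k(p,q) = \<Sum>\<^sub>\<alpha> c\<^bsub>k,\<alpha>\<^esub>(p) c\<^bsub>k,\<alpha>\<^esub>(q)\<^sup>*\<close> yields the coefficients. The diagonals
  \<open>M\<^sub>k(n,n)\<close> sum over \<open>k\<close> to the trace of \<open>E(|n\<rangle>\<langle>n|)\<close>, which gives the normalisation.
  By construction the Kraus series agrees with \<open>E\<close> on every matrix unit. Both sides, evaluated
  at \<open>X = BC\<close>, are bounded by the Hilbert--Schmidt norms of \<open>B\<close> and \<open>C\<close> (for \<open>E\<close> by
  complete positivity on a \<open>2 \<times> 2\<close> Gram block), so truncating \<open>B\<close> and \<open>C\<close> to finite
  corners shows that they agree on all trace-class operators.
\<close>

lemma has_sum_eq_single: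
  fixes f :: "'a \<Rightarrow> 'b::{comm_monoid_add,topological_space}"
  assumes "\<And>x. x \<noteq> a \<Longrightarrow> f x = 0"
  shows "(f has_sum f a) UNIV"
  by (rule has_sum_finite_neutralI[of "{a}"]) (use assms in auto)

lemma infsum_eq_single:
  fixes f :: "'a \<Rightarrow> 'b::{comm_monoid_add,t2_space}"
  assumes "\<And>x. x \<noteq> a \<Longrightarrow> f x = 0"
  shows "infsum f UNIV = f a"
  using has_sum_eq_single[OF assms] by (rule infsumI)

lemma has_sum_sum:
  fixes f :: "'i \<Rightarrow> 'a \<Rightarrow> 'b::topological_comm_monoid_add"
  assumes "finite I" "\<And>i. i \<in> I \<Longrightarrow> (f i has_sum s i) A"
  shows "((\<lambda>x. \<Sum>i\<in>I. f i x) has_sum (\<Sum>i\<in>I. s i)) A"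
  using assms by (induction I rule: finite_induct) (simp_all add: has_sum_add)

lemma has_sum_slice:
  assumes zero: "\<And>k \<alpha>. k \<noteq> k0 \<Longrightarrow> f (k, \<alpha>) = 0" and sum: "((\<lambda>\<alpha>. f (k0, \<alpha>)) has_sum S) UNIV"
  shows "(f has_sum S) UNIV"
proof -
  have "(f has_sum S) (range (Pair k0))"
    using sum by (subst has_sum_reindex) (auto simp: inj_on_def o_def)
  then show ?thesis
    by (rule has_sum_cong_neutral[THEN iffD1, rotated -1]) (auto intro: zero)
qed

lemma complex_nonneg_iff: "0 \<le> (z::complex) \<longleftrightarrow> Im z = 0 \<and> 0 \<le> Re z"
  by (auto simp: less_eq_complex_def)

lemma cnj_mult_self: "cnj z * z = complex_of_real ((cmod z)\<^sup>2)"
  by (metis complex_norm_square mult.commute)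

lemma mult_le_weighted_amgm:
  fixes a b t :: real
  assumes "t > 0"
  shows "a * b \<le> (t\<^sup>2 * a\<^sup>2 + b\<^sup>2 / t\<^sup>2) / 2"
proof -
  have "0 \<le> (t * a - b / t)\<^sup>2" by simp
  also have "\<dots> = t\<^sup>2 * a\<^sup>2 - 2 * a * b + b\<^sup>2 / t\<^sup>2"
    using assms by (simp add: power2_eq_square field_simps)
  finally show ?thesis by simp
qed

text \<open>Conversely, \<open>sqrt (a * b)\<close> is the infimum of the weighted means over \<open>t > 0\<close>:
  the choice \<open>t\<^sup>2 = (sqrt b + \<epsilon>) / (sqrt a + \<epsilon>)\<close> brings the mean within
  \<open>\<epsilon> (sqrt a + sqrt b) / 2\<close> of it.\<close>
lemma le_sqrt_mult_if_le_weighted_means: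
  fixes x a b :: real
  assumes a: "0 \<le> a" and b: "0 \<le> b"
    and le: "\<And>t. t > 0 \<Longrightarrow> x \<le> (t\<^sup>2 * a + b / t\<^sup>2) / 2"
  shows "x \<le> sqrt (a * b)"
proof (rule field_le_epsilon)
  fix e :: real assume e: "e > 0"
  define s r where "s = sqrt a" and "r = sqrt b"
  have s: "0 \<le> s" and r: "0 \<le> r" by (simp_all add: s_def r_def a b)
  define \<epsilon> where "\<epsilon> = e / (s + r + 1)"
  have \<epsilon>: "\<epsilon> > 0" using e s r by (simp add: \<epsilon>_def)
  define t where "t = sqrt ((r + \<epsilon>) / (s + \<epsilon>))"
  have t: "t > 0" and t2: "t\<^sup>2 = (r + \<epsilon>) / (s + \<epsilon>)" using \<epsilon> s r by (simp_all add: t_def)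
  have "t\<^sup>2 * a = (r + \<epsilon>) * (s * s / (s + \<epsilon>))"
    using a by (simp add: t2 s_def flip: power2_eq_square)
  also have "\<dots> \<le> (r + \<epsilon>) * s"
    using \<epsilon> s r by (intro mult_left_mono) (simp_all add: field_simps)
  finally have A: "t\<^sup>2 * a \<le> (r + \<epsilon>) * s" .
  have "b / t\<^sup>2 = (s + \<epsilon>) * (r * r / (r + \<epsilon>))"
    using b \<epsilon> s r by (simp add: t2 r_def field_simps flip: power2_eq_square)
  also have "\<dots> \<le> (s + \<epsilon>) * r"
    using \<epsilon> s r by (intro mult_left_mono) (simp_all add: field_simps)
  finally have B: "b / t\<^sup>2 \<le> (s + \<epsilon>) * r" .
  have "\<epsilon> * (s + r) \<le> e"
    using e s r by (simp add: \<epsilon>_def field_simps)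
  moreover have "s * r = sqrt (a * b)" by (simp add: s_def r_def real_sqrt_mult)
  ultimately show "x \<le> sqrt (a * b) + e"
    using le[OF t] A B e by (simp add: algebra_simps)
qed

section \<open>Hilbert--Schmidt matrices\<close>

definition hs_norm2 :: "mat \<Rightarrow> real" where
  "hs_norm2 B = (\<Sum>\<^sub>\<infinity>(i,j). (cmod (B i j))\<^sup>2)"

definition row_norm2 :: "mat \<Rightarrow> nat \<Rightarrow> real" where
  "row_norm2 B i = (\<Sum>\<^sub>\<infinity>j. (cmod (B i j))\<^sup>2)"

lemma hs_norm2_nonneg: "0 \<le> hs_norm2 B"
  unfolding hs_norm2_def by (rule infsum_nonneg) auto

lemma row_norm2_nonneg: "0 \<le> row_norm2 B i"
  unfolding row_norm2_def by (rule infsum_nonneg) simp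

lemma hilbert_schmidt_has_sum:
  "hilbert_schmidt B \<Longrightarrow> ((\<lambda>(i,j). (cmod (B i j))\<^sup>2) has_sum hs_norm2 B) UNIV"
  unfolding hilbert_schmidt_def hs_norm2_def by simp

lemma hilbert_schmidt_row_has_sum:
  assumes "hilbert_schmidt B"
  shows "((\<lambda>j. (cmod (B i j))\<^sup>2) has_sum row_norm2 B i) UNIV"
proof -
  have "(\<lambda>(i,j). (cmod (B i j))\<^sup>2) summable_on Sigma UNIV (\<lambda>_. UNIV)"
    using assms unfolding hilbert_schmidt_def by (simp add: UNIV_Times_UNIV)
  from summable_on_SigmaD1[OF this, of i] show ?thesis
    unfolding row_norm2_def by simp
qed

lemma hilbert_schmidt_rows_has_sum:
  assumes "hilbert_schmidt B"
  shows "(row_norm2 B has_sum hs_norm2 B) UNIV"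
proof -
  have "((\<lambda>(i,j). (cmod (B i j))\<^sup>2) has_sum hs_norm2 B) (Sigma UNIV (\<lambda>_. UNIV))"
    using hilbert_schmidt_has_sum[OF assms] by (simp add: UNIV_Times_UNIV)
  from has_sum_SigmaD[OF this] show ?thesis
    using hilbert_schmidt_row_has_sum[OF assms] by simp
qed

lemma sum_row_norm2_le:
  assumes "hilbert_schmidt B" "finite P"
  shows "sum (row_norm2 B) P \<le> hs_norm2 B"
  by (rule finite_sum_le_has_sum[OF hilbert_schmidt_rows_has_sum[OF assms(1)]])
    (use assms row_norm2_nonneg in auto)

lemma mat_adj_adj [simp]: "mat_adj (mat_adj B) = B"
  by (simp add: mat_adj_def)

lemma hilbert_schmidt_adj_has_sum:
  assumes "hilbert_schmidt B"
  shows "((\<lambda>(i,j). (cmod (mat_adj B i j))\<^sup>2) has_sum hs_norm2 B) UNIV"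
proof -
  have "((\<lambda>(i,j). (cmod (B i j))\<^sup>2) has_sum hs_norm2 B) (UNIV \<times> UNIV)"
    using hilbert_schmidt_has_sum[OF assms] by (simp add: UNIV_Times_UNIV)
  then have "((\<lambda>(j,i). (cmod (B i j))\<^sup>2) has_sum hs_norm2 B) (UNIV \<times> UNIV)"
    by (subst (asm) has_sum_swap) (simp add: case_prod_unfold)
  then show ?thesis by (simp add: UNIV_Times_UNIV mat_adj_def case_prod_unfold)
qed

lemma hilbert_schmidt_adj: "hilbert_schmidt B \<Longrightarrow> hilbert_schmidt (mat_adj B)"
  using hilbert_schmidt_adj_has_sum unfolding hilbert_schmidt_def by (blast dest: has_sum_imp_summable)

lemma hs_norm2_adj: "hilbert_schmidt B \<Longrightarrow> hs_norm2 (mat_adj B) = hs_norm2 B"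
  using hilbert_schmidt_adj_has_sum[THEN infsumI] by (simp add: hs_norm2_def)

lemma hilbert_schmidt_mono:
  assumes B: "hilbert_schmidt B" and le: "\<And>i j. cmod (B' i j) \<le> cmod (B i j)"
  shows "hilbert_schmidt B'" and "hs_norm2 B' \<le> hs_norm2 B"
proof -
  have le2: "(cmod (B' i j))\<^sup>2 \<le> (cmod (B i j))\<^sup>2" for i j
    using le[of i j] by (simp add: power_mono)
  show hs: "hilbert_schmidt B'" unfolding hilbert_schmidt_def
    by (rule summable_on_comparison_test[OF B[unfolded hilbert_schmidt_def]]) (use le2 in auto)
  show "hs_norm2 B' \<le> hs_norm2 B" unfolding hs_norm2_def
    by (rule infsum_mono[OF hs[unfolded hilbert_schmidt_def] B[unfolded hilbert_schmidt_def]])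
      (use le2 in auto)
qed

lemma hilbert_schmidt_finite_support:
  "finite {(i,j). A i j \<noteq> 0} \<Longrightarrow> hilbert_schmidt A"
  unfolding hilbert_schmidt_def
  by (rule finite_nonzero_values_imp_summable_on) (simp add: case_prod_unfold)

text \<open>Cauchy--Schwarz for a single matrix entry, in the weighted AM-GM form that sums
  well over families of entries.\<close>
lemma mat_mult_entry_bound:
  assumes B: "hilbert_schmidt B" and C: "hilbert_schmidt C" and t: "t > 0"
  shows "(\<lambda>r. norm (B p r * C r q)) summable_on UNIV"
    and "cmod (mat_mult B C p q) \<le> (t\<^sup>2 * row_norm2 B p + row_norm2 (mat_adj C) q / t\<^sup>2) / 2"
proof -
  define g where "g r = (t\<^sup>2 * (cmod (B p r))\<^sup>2 + (cmod (C r q))\<^sup>2 / t\<^sup>2) / 2" for r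
  have "((\<lambda>r. t\<^sup>2 * (cmod (B p r))\<^sup>2 + (cmod (mat_adj C q r))\<^sup>2 / t\<^sup>2) has_sum
      t\<^sup>2 * row_norm2 B p + row_norm2 (mat_adj C) q / t\<^sup>2) UNIV"
    by (intro has_sum_add has_sum_cmult_right has_sum_divide_const
        hilbert_schmidt_row_has_sum B hilbert_schmidt_adj C)
  from has_sum_divide_const[OF this, of 2]
  have g: "(g has_sum (t\<^sup>2 * row_norm2 B p + row_norm2 (mat_adj C) q / t\<^sup>2) / 2) UNIV"
    unfolding g_def by (simp add: mat_adj_def[of C])
  have le: "norm (B p r * C r q) \<le> g r" for r
    using mult_le_weighted_amgm[OF t, of "cmod (B p r)" "cmod (C r q)"] by (simp add: g_def norm_mult)
  show abs: "(\<lambda>r. norm (B p r * C r q)) summable_on UNIV"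
    by (rule summable_on_comparison_test[OF has_sum_imp_summable[OF g]]) (use le in auto)
  have "cmod (mat_mult B C p q) \<le> (\<Sum>\<^sub>\<infinity>r. norm (B p r * C r q))"
    unfolding mat_mult_def by (rule norm_infsum_bound[OF abs])
  also have "\<dots> \<le> infsum g UNIV"
    by (rule infsum_mono[OF abs has_sum_imp_summable[OF g]]) (use le in auto)
  also have "\<dots> = (t\<^sup>2 * row_norm2 B p + row_norm2 (mat_adj C) q / t\<^sup>2) / 2"
    using g by (rule infsumI)
  finally show "cmod (mat_mult B C p q) \<le> (t\<^sup>2 * row_norm2 B p + row_norm2 (mat_adj C) q / t\<^sup>2) / 2" .
qed

lemma mat_mult_summable:
  "hilbert_schmidt B \<Longrightarrow> hilbert_schmidt C \<Longrightarrow> (\<lambda>r. B p r * C r q) summable_on UNIV"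
  by (rule abs_summable_summable[OF mat_mult_entry_bound(1)[of B C 1]]) simp_all

lemma mat_mult_has_sum:
  "hilbert_schmidt B \<Longrightarrow> hilbert_schmidt C \<Longrightarrow> ((\<lambda>r. B p r * C r q) has_sum mat_mult B C p q) UNIV"
  unfolding mat_mult_def using mat_mult_summable by (rule has_sum_infsum)

lemma mat_mult_add_left:
  assumes "hilbert_schmidt B1" "hilbert_schmidt B2" "hilbert_schmidt C"
  shows "mat_mult (\<lambda>i j. B1 i j + B2 i j) C = (\<lambda>i j. mat_mult B1 C i j + mat_mult B2 C i j)"
  unfolding mat_mult_def
  using infsum_add[OF mat_mult_summable[OF assms(1,3)] mat_mult_summable[OF assms(2,3)]]
  by (simp add: distrib_right)

lemma mat_mult_add_right:
  assumes "hilbert_schmidt B" "hilbert_schmidt C1" "hilbert_schmidt C2"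
  shows "mat_mult B (\<lambda>i j. C1 i j + C2 i j) = (\<lambda>i j. mat_mult B C1 i j + mat_mult B C2 i j)"
  unfolding mat_mult_def
  using infsum_add[OF mat_mult_summable[OF assms(1,2)] mat_mult_summable[OF assms(1,3)]]
  by (simp add: distrib_left)

lemma trace_class_mat_mult:
  "hilbert_schmidt B \<Longrightarrow> hilbert_schmidt C \<Longrightarrow> trace_class (mat_mult B C)"
  unfolding trace_class_def by blast

lemma trace_class_diag_abs_summable:
  assumes "trace_class A"
  shows "(\<lambda>i. norm (A i i)) summable_on UNIV"
proof -
  obtain B C where B: "hilbert_schmidt B" and C: "hilbert_schmidt C" and A: "A = mat_mult B C"
    using assms unfolding trace_class_def by blast
  have "((\<lambda>i. (row_norm2 B i + row_norm2 (mat_adj C) i) / 2) has_sum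
      (hs_norm2 B + hs_norm2 (mat_adj C)) / 2) UNIV"
    by (intro has_sum_divide_const has_sum_add hilbert_schmidt_rows_has_sum B hilbert_schmidt_adj C)
  then show ?thesis
    by (rule summable_on_comparison_test[OF has_sum_imp_summable])
      (use mat_mult_entry_bound(2)[OF B C, of 1] A in auto)
qed

lemma trace_class_diag_summable: "trace_class A \<Longrightarrow> (\<lambda>i. A i i) summable_on UNIV"
  by (rule abs_summable_summable[OF trace_class_diag_abs_summable])

lemma gram_diag_has_sum:
  assumes Z: "hilbert_schmidt Z"
  shows "((\<lambda>i. mat_mult (mat_adj Z) Z i i) has_sum of_real (hs_norm2 Z)) UNIV"
proof -
  have "mat_mult (mat_adj Z) Z i i = of_real (row_norm2 (mat_adj Z) i)" for i
  proof (rule has_sum_unique)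
    show "((\<lambda>r. complex_of_real ((cmod (mat_adj Z i r))\<^sup>2)) has_sum mat_mult (mat_adj Z) Z i i) UNIV"
      using mat_mult_has_sum[OF hilbert_schmidt_adj[OF Z] Z, of i i]
      by (simp add: mat_adj_def cnj_mult_self)
    show "((\<lambda>r. complex_of_real ((cmod (mat_adj Z i r))\<^sup>2)) has_sum of_real (row_norm2 (mat_adj Z) i)) UNIV"
      using has_sum_of_real[OF hilbert_schmidt_row_has_sum[OF hilbert_schmidt_adj[OF Z]]] by simp
  qed
  then show ?thesis
    using has_sum_of_real[OF hilbert_schmidt_rows_has_sum[OF hilbert_schmidt_adj[OF Z]]]
    by (simp add: hs_norm2_adj[OF Z])
qed

definition trunc_mat :: "nat \<Rightarrow> mat \<Rightarrow> mat" where
  "trunc_mat N B = (\<lambda>i j. if i < N \<and> j < N then B i j else 0)"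

definition tail_mat :: "nat \<Rightarrow> mat \<Rightarrow> mat" where
  "tail_mat N B = (\<lambda>i j. if i < N \<and> j < N then 0 else B i j)"

lemma tail_plus_trunc: "B = (\<lambda>i j. tail_mat N B i j + trunc_mat N B i j)"
  by (intro ext) (simp add: tail_mat_def trunc_mat_def)

lemma hilbert_schmidt_trunc:
  "hilbert_schmidt B \<Longrightarrow> hilbert_schmidt (trunc_mat N B)"
  "hilbert_schmidt B \<Longrightarrow> hs_norm2 (trunc_mat N B) \<le> hs_norm2 B"
  using hilbert_schmidt_mono[of B "trunc_mat N B"] by (auto simp: trunc_mat_def)

lemma hilbert_schmidt_tail: "hilbert_schmidt B \<Longrightarrow> hilbert_schmidt (tail_mat N B)"
  using hilbert_schmidt_mono[of B "tail_mat N B"] by (auto simp: tail_mat_def)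

lemma hs_norm2_tail:
  assumes "hilbert_schmidt B"
  shows "hs_norm2 (tail_mat N B) = hs_norm2 B - hs_norm2 (trunc_mat N B)"
proof -
  have "hs_norm2 B = (\<Sum>\<^sub>\<infinity>x. (\<lambda>(i,j). (cmod (tail_mat N B i j))\<^sup>2) x + (\<lambda>(i,j). (cmod (trunc_mat N B i j))\<^sup>2) x)"
    unfolding hs_norm2_def by (rule infsum_cong) (auto simp: tail_mat_def trunc_mat_def)
  also have "\<dots> = hs_norm2 (tail_mat N B) + hs_norm2 (trunc_mat N B)"
    unfolding hs_norm2_def
    using hilbert_schmidt_tail[OF assms] hilbert_schmidt_trunc(1)[OF assms]
    by (intro infsum_add) (simp_all add: hilbert_schmidt_def)
  finally show ?thesis by simp
qed

lemma tendsto_hs_norm2_tail: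
  assumes B: "hilbert_schmidt B"
  shows "(\<lambda>N. hs_norm2 (tail_mat N B)) \<longlonglongrightarrow> 0"
proof (rule LIMSEQ_I)
  fix \<delta> :: real assume \<delta>: "\<delta> > 0"
  let ?f = "\<lambda>(i,j). (cmod (B i j))\<^sup>2"
  obtain F where F: "finite F" "dist (sum ?f F) (hs_norm2 B) \<le> \<delta> / 2"
    using has_sum_finite_approximation[OF hilbert_schmidt_has_sum[OF B], of "\<delta> / 2"] \<delta> by auto
  obtain N0 where N0: "fst ` F \<union> snd ` F \<subseteq> {..<N0}"
    using finite_nat_bounded[of "fst ` F \<union> snd ` F"] F(1) by blast
  have "norm (hs_norm2 (tail_mat N B) - 0) < \<delta>" if N: "N \<ge> N0" for N
  proof -
    have "sum ?f F = (\<Sum>(i,j)\<in>F. (cmod (trunc_mat N B i j))\<^sup>2)"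
      using N0 N by (intro sum.cong) (force simp: trunc_mat_def)+
    also have "\<dots> \<le> hs_norm2 (trunc_mat N B)"
      unfolding hs_norm2_def using hilbert_schmidt_trunc(1)[OF B] F(1)
      by (intro finite_sum_le_infsum) (auto simp: hilbert_schmidt_def)
    moreover have "hs_norm2 B - sum ?f F \<le> \<delta> / 2"
      using F(2) unfolding dist_real_def abs_le_iff by linarith
    ultimately show ?thesis
      using hs_norm2_tail[OF B, of N] hs_norm2_nonneg[of "tail_mat N B"] \<delta> by simp
  qed
  then show "\<exists>N0. \<forall>N\<ge>N0. norm (hs_norm2 (tail_mat N B) - 0) < \<delta>" by blast
qed

section \<open>Positive matrices and their Cholesky factorisation\<close>

definition sesq_form :: "mat \<Rightarrow> nat set \<Rightarrow> (nat \<Rightarrow> complex) \<Rightarrow> (nat \<Rightarrow> complex) \<Rightarrow> complex" where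
  "sesq_form M F x y = (\<Sum>i\<in>F. \<Sum>j\<in>F. cnj (x i) * M i j * y j)"

lemma positive_op_iff: "positive_op M \<longleftrightarrow> (\<forall>F v. finite F \<longrightarrow> 0 \<le> sesq_form M F v v)"
  unfolding positive_op_def sesq_form_def Let_def complex_nonneg_iff ..

lemma positive_opD: "positive_op M \<Longrightarrow> finite F \<Longrightarrow> 0 \<le> sesq_form M F v v"
  unfolding positive_op_iff by blast

lemma positive_block_iff:
  "positive_block N X \<longleftrightarrow> (\<forall>F v. finite F \<longrightarrow>
     0 \<le> (\<Sum>i<N. \<Sum>j<N. \<Sum>p\<in>F. \<Sum>q\<in>F. cnj (v i p) * X i j p q * v j q))"
  unfolding positive_block_def Let_def complex_nonneg_iff ..

lemma positive_op_if_positive_block_1: "positive_block 1 (\<lambda>_ _. A) \<Longrightarrow> positive_op A"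
  unfolding positive_block_iff positive_op_iff sesq_form_def lessThan_Suc by auto

text \<open>The block form of \<open>(Z\<^sub>i\<^sup>\<dagger> Z\<^sub>j)\<close> at \<open>v\<close> is \<open>\<Sum>\<^sub>r |w\<^sub>r|\<^sup>2\<close> with
  \<open>w\<^sub>r = \<Sum>\<^sub>j\<^sub>,\<^sub>q Z\<^sub>j r q v\<^sub>j q\<close>.\<close>
lemma positive_block_gram:
  assumes Z: "\<And>i. hilbert_schmidt (Z i)"
  shows "positive_block N (\<lambda>i j. mat_mult (mat_adj (Z i)) (Z j))"
  unfolding positive_block_iff
proof (intro allI impI)
  fix F :: "nat set" and v :: "nat \<Rightarrow> nat \<Rightarrow> complex"
  assume F: "finite F"
  define w where "w r = (\<Sum>j<N. \<Sum>q\<in>F. Z j r q * v j q)" for r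
  define S where "S = (\<Sum>i<N. \<Sum>j<N. \<Sum>p\<in>F. \<Sum>q\<in>F.
    cnj (v i p) * mat_mult (mat_adj (Z i)) (Z j) p q * v j q)"
  have "((\<lambda>r. \<Sum>i<N. \<Sum>j<N. \<Sum>p\<in>F. \<Sum>q\<in>F. cnj (v i p) * (mat_adj (Z i) p r * Z j r q) * v j q)
      has_sum S) UNIV"
    unfolding S_def
    by (intro has_sum_sum F finite_lessThan has_sum_cmult_left has_sum_cmult_right
        mat_mult_has_sum hilbert_schmidt_adj Z)
  also have "(\<lambda>r. \<Sum>i<N. \<Sum>j<N. \<Sum>p\<in>F. \<Sum>q\<in>F. cnj (v i p) * (mat_adj (Z i) p r * Z j r q) * v j q)
      = (\<lambda>r. cnj (w r) * w r)"
  proof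
    fix r
    have "cnj (w r) = (\<Sum>i<N. \<Sum>p\<in>F. cnj (v i p) * cnj (Z i r p))"
      by (simp add: w_def cnj_sum mult.commute)
    then have "cnj (w r) * w r = (\<Sum>i<N. \<Sum>p\<in>F. cnj (v i p) * cnj (Z i r p) * w r)"
      by (simp add: sum_distrib_right)
    also have "\<dots> = (\<Sum>i<N. \<Sum>p\<in>F. \<Sum>j<N. \<Sum>q\<in>F. cnj (v i p) * cnj (Z i r p) * (Z j r q * v j q))"
      by (simp add: w_def sum_distrib_left)
    also have "\<dots> = (\<Sum>i<N. \<Sum>j<N. \<Sum>p\<in>F. \<Sum>q\<in>F. cnj (v i p) * cnj (Z i r p) * (Z j r q * v j q))"
      by (rule sum.cong[OF refl], rule sum.swap)
    also have "\<dots> = (\<Sum>i<N. \<Sum>j<N. \<Sum>p\<in>F. \<Sum>q\<in>F. cnj (v i p) * (mat_adj (Z i) p r * Z j r q) * v j q)"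
      by (simp add: mat_adj_def mult_ac)
    finally show "(\<Sum>i<N. \<Sum>j<N. \<Sum>p\<in>F. \<Sum>q\<in>F. cnj (v i p) * (mat_adj (Z i) p r * Z j r q) * v j q)
      = cnj (w r) * w r" ..
  qed
  finally have S: "((\<lambda>r. cnj (w r) * w r) has_sum S) UNIV" .
  show "0 \<le> S"
    using infsum_nonneg_complex[OF has_sum_imp_summable[OF S]] S
    by (simp add: infsumI cnj_mult_self complex_nonneg_iff)
qed

lemma nonneg_form_2x2:
  fixes a b c d :: complex
  assumes H: "\<And>x y. 0 \<le> cnj x * a * x + cnj x * b * y + cnj y * c * x + cnj y * d * y"
  shows "c = cnj b" and "0 \<le> a" and "0 \<le> d" and "(cmod b)\<^sup>2 \<le> Re a * Re d"
proof -
  show a: "0 \<le> a" using H[of 1 0] by simp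
  show d: "0 \<le> d" using H[of 0 1] by simp
  have "0 \<le> a + b + c + d" using H[of 1 1] by simp
  moreover have "0 \<le> a + \<i> * b - \<i> * c + d" using H[of 1 \<i>] by (simp add: algebra_simps)
  ultimately show c: "c = cnj b"
    using a d by (simp add: complex_nonneg_iff complex_eq_iff)
  have a': "a = of_real (Re a)" and d': "d = of_real (Re d)"
    using a d by (simp_all add: complex_nonneg_iff complex_eq_iff)
  have key: "0 \<le> s\<^sup>2 * (cmod b)\<^sup>2 * Re a - 2 * s * (cmod b)\<^sup>2 + Re d" for s :: real
  proof -
    have "0 \<le> cnj (- (of_real s * b)) * a * (- (of_real s * b)) + cnj (- (of_real s * b)) * b * 1
        + cnj 1 * c * (- (of_real s * b)) + cnj 1 * d * 1"
      by (rule H)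
    also have "\<dots> = of_real (s\<^sup>2 * Re a) * (cnj b * b) - of_real (2 * s) * (cnj b * b) + of_real (Re d)"
      by (subst a', subst d') (simp add: c algebra_simps power2_eq_square)
    also have "\<dots> = of_real (s\<^sup>2 * (cmod b)\<^sup>2 * Re a - 2 * s * (cmod b)\<^sup>2 + Re d)"
      by (simp add: cnj_mult_self)
    finally show ?thesis by (simp add: complex_nonneg_iff)
  qed
  show "(cmod b)\<^sup>2 \<le> Re a * Re d"
  proof (cases "Re a = 0")
    case True
    have "(cmod b)\<^sup>2 \<le> 0"
    proof (rule ccontr)
      assume pos: "\<not> (cmod b)\<^sup>2 \<le> 0"
      define s where "s = (Re d + 1) / (2 * (cmod b)\<^sup>2)"
      have "0 \<le> - 2 * s * (cmod b)\<^sup>2 + Re d"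
        using key[of s] True by simp
      moreover have "2 * s * (cmod b)\<^sup>2 = Re d + 1"
        using pos by (simp add: s_def field_simps)
      ultimately show False by linarith
    qed
    then show ?thesis using True by simp
  next
    case False
    then have pos: "Re a > 0" using a by (simp add: complex_nonneg_iff)
    have "0 \<le> (1 / Re a)\<^sup>2 * (cmod b)\<^sup>2 * Re a - 2 * (1 / Re a) * (cmod b)\<^sup>2 + Re d"
      by (rule key)
    also have "\<dots> = Re d - (cmod b)\<^sup>2 / Re a"
      using pos by (simp add: field_simps power2_eq_square)
    finally show ?thesis using pos by (simp add: field_simps)
  qed
qed

lemma positive_op_diag_nonneg: "positive_op M \<Longrightarrow> 0 \<le> M p p"
  using positive_opD[of M "{p}" "\<lambda>_. 1"] by (simp add: sesq_form_def)

lemma positive_op_form_2x2: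
  assumes "positive_op M" "p \<noteq> q"
  shows "0 \<le> cnj x * M p p * x + cnj x * M p q * y + cnj y * M q p * x + cnj y * M q q * y"
  using positive_opD[OF assms(1), of "{p,q}" "\<lambda>i. if i = p then x else y"] assms(2)
  by (simp add: sesq_form_def add.assoc)

lemma positive_op_hermitian:
  assumes "positive_op M"
  shows "M q p = cnj (M p q)"
proof (cases "p = q")
  case True
  then show ?thesis
    using positive_op_diag_nonneg[OF assms, of p] by (simp add: complex_nonneg_iff complex_eq_iff)
qed (rule nonneg_form_2x2(1)[OF positive_op_form_2x2[OF assms]])

lemma positive_op_column_zero:
  assumes "positive_op M" "M a a = 0"
  shows "M p a = 0"
proof (cases "p = a")
  case False
  have "(cmod (M p a))\<^sup>2 \<le> Re (M p p) * Re (M a a)"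
    by (rule nonneg_form_2x2(4)[OF positive_op_form_2x2[OF assms(1) False]])
  then show ?thesis using assms(2) by simp
qed (use assms in simp)

lemma sesq_form_add:
  "sesq_form M G (\<lambda>i. x i + y i) (\<lambda>i. x i + y i)
     = sesq_form M G x x + sesq_form M G x y + sesq_form M G y x + sesq_form M G y y"
  unfolding sesq_form_def by (simp add: algebra_simps sum.distrib)

lemma sesq_form_restrict:
  assumes "finite G" "F \<subseteq> G"
  shows "sesq_form M G (\<lambda>i. if i \<in> F then x i else 0) (\<lambda>i. if i \<in> F then y i else 0)
    = sesq_form M F x y"
proof -
  have "sesq_form M G (\<lambda>i. if i \<in> F then x i else 0) (\<lambda>i. if i \<in> F then y i else 0)
      = (\<Sum>i\<in>F. \<Sum>j\<in>G. cnj (if i \<in> F then x i else 0) * M i j * (if j \<in> F then y j else 0))"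
    unfolding sesq_form_def by (rule sum.mono_neutral_right) (use assms in auto)
  also have "\<dots> = sesq_form M F x y"
    unfolding sesq_form_def
    by (intro sum.cong refl sum.mono_neutral_cong_right) (use assms in auto)
  finally show ?thesis .
qed

lemma sesq_form_delta_right:
  assumes "finite G" "a \<in> G"
  shows "sesq_form M G x (\<lambda>j. if j = a then t else 0) = (\<Sum>i\<in>G. cnj (x i) * M i a) * t"
  unfolding sesq_form_def using assms
  by (simp add: if_distrib[of "\<lambda>z. _ * z"] sum.delta' sum_distrib_right cong: if_cong)

lemma sesq_form_delta_left:
  assumes "finite G" "a \<in> G"
  shows "sesq_form M G (\<lambda>i. if i = a then t else 0) y = cnj t * (\<Sum>j\<in>G. M a j * y j)"
proof -
  have "sesq_form M G (\<lambda>i. if i = a then t else 0) y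
      = (\<Sum>i\<in>G. if i = a then (\<Sum>j\<in>G. cnj t * M i j * y j) else 0)"
    unfolding sesq_form_def by (rule sum.cong) auto
  then show ?thesis using assms by (simp add: sum_distrib_left mult.assoc)
qed

text \<open>The form of the Schur complement at \<open>v\<close> is the form of \<open>M\<close> at \<open>v + t e\<^sub>a\<close> for the
  minimising \<open>t\<close>.\<close>
lemma positive_op_schur:
  assumes M: "positive_op M" and pos: "0 < Re (M a a)"
  shows "positive_op (\<lambda>p q. M p q - M p a * cnj (M q a) / of_real (Re (M a a)))"
  unfolding positive_op_iff
proof (intro allI impI)
  fix F :: "nat set" and v :: "nat \<Rightarrow> complex" assume F: "finite F"
  define d where "d = Re (M a a)"
  have Maa: "M a a = of_real d"
    using positive_op_diag_nonneg[OF M, of a] by (simp add: d_def complex_nonneg_iff complex_eq_iff)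
  define w where "w = (\<Sum>i\<in>F. cnj (v i) * M i a)"
  define t where "t = - cnj w / of_real d"
  define G where "G = insert a F"
  have G: "finite G" "F \<subseteq> G" "a \<in> G" using F by (auto simp: G_def)
  define x where "x i = (if i \<in> F then v i else 0)" for i
  define y where "y j = (if j = a then t else 0)" for j
  have xy: "sesq_form M G x y = w * t"
  proof -
    have "(\<Sum>i\<in>G. cnj (x i) * M i a) = w"
      unfolding x_def w_def by (rule sum.mono_neutral_cong_right) (use G in auto)
    then show ?thesis unfolding y_def sesq_form_delta_right[OF G(1,3)] by simp
  qed
  have yx: "sesq_form M G y x = cnj t * cnj w"
  proof -
    have "(\<Sum>j\<in>G. M a j * x j) = (\<Sum>j\<in>F. M a j * v j)"
      unfolding x_def by (rule sum.mono_neutral_cong_right) (use G in auto)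
    also have "\<dots> = cnj w"
      by (simp add: w_def cnj_sum positive_op_hermitian[OF M, of _ a] mult.commute)
    finally show ?thesis unfolding y_def sesq_form_delta_left[OF G(1,3)] by simp
  qed
  have yy: "sesq_form M G y y = cnj t * M a a * t"
    unfolding y_def sesq_form_delta_left[OF G(1,3)] using G by (simp add: if_distrib[of "\<lambda>z. _ * z"] cong: if_cong)
  have "0 \<le> sesq_form M G (\<lambda>i. x i + y i) (\<lambda>i. x i + y i)"
    by (rule positive_opD[OF M G(1)])
  also have "\<dots> = sesq_form M F v v + w * t + cnj t * cnj w + cnj t * M a a * t"
    unfolding sesq_form_add xy yx yy
    using sesq_form_restrict[OF G(1,2), of M v v] by (simp add: x_def)
  also have "\<dots> = sesq_form M F v v - w * cnj w / of_real d"
    using pos unfolding t_def Maa d_def[symmetric] by (simp add: field_simps)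
  also have "\<dots> = sesq_form (\<lambda>p q. M p q - M p a * cnj (M q a) / of_real (Re (M a a))) F v v"
  proof -
    have "(\<Sum>i\<in>F. \<Sum>j\<in>F. cnj (v i) * (M i a * cnj (M j a) / of_real d) * v j) = w * cnj w / of_real d"
      by (simp add: w_def cnj_sum sum_distrib_left sum_distrib_right sum_divide_distrib mult_ac)
    then show ?thesis
      by (simp add: sesq_form_def algebra_simps sum_subtractf d_def)
  qed
  finally show "0 \<le> sesq_form (\<lambda>p q. M p q - M p a * cnj (M q a) / of_real (Re (M a a))) F v v" .
qed

text \<open>Cholesky elimination of an infinite positive matrix: step \<open>a\<close> subtracts the rank-one
  part \<open>chol_col M a \<otimes> chol_col M a\<^sup>*\<close> that clears row and column \<open>a\<close>.\<close>
fun chol_rest :: "mat \<Rightarrow> nat \<Rightarrow> mat" where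
  "chol_rest M 0 = M"
| "chol_rest M (Suc a) = (if 0 < Re (chol_rest M a a a)
      then (\<lambda>p q. chol_rest M a p q - chol_rest M a p a * cnj (chol_rest M a q a)
                    / of_real (Re (chol_rest M a a a)))
      else chol_rest M a)"

declare chol_rest.simps(2) [simp del]

definition chol_col :: "mat \<Rightarrow> nat \<Rightarrow> nat \<Rightarrow> complex" where
  "chol_col M a p = (if 0 < Re (chol_rest M a a a)
     then chol_rest M a p a / of_real (sqrt (Re (chol_rest M a a a))) else 0)"

lemma positive_op_chol_rest: "positive_op M \<Longrightarrow> positive_op (chol_rest M a)"
  by (induction a) (auto intro: positive_op_schur simp: chol_rest.simps(2))

lemma chol_rest_Suc: "chol_rest M (Suc a) p q = chol_rest M a p q - chol_col M a p * cnj (chol_col M a q)"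
proof (cases "0 < Re (chol_rest M a a a)")
  case True
  define d where "d = Re (chol_rest M a a a)"
  have "complex_of_real (sqrt d) * complex_of_real (sqrt d) = complex_of_real d"
    using True by (simp add: d_def flip: of_real_mult)
  then have "chol_col M a p * cnj (chol_col M a q) = chol_rest M a p a * cnj (chol_rest M a q a) / of_real d"
    using True by (simp add: chol_col_def d_def)
  then show ?thesis using True by (simp add: d_def chol_rest.simps(2))
qed (simp add: chol_col_def chol_rest.simps(2))

lemma chol_rest_decomp:
  "M p q = (\<Sum>\<alpha><s. chol_col M \<alpha> p * cnj (chol_col M \<alpha> q)) + chol_rest M s p q"
  by (induction s) (simp_all add: chol_rest_Suc)

lemma chol_rest_Suc_column_zero:
  assumes M: "positive_op M"
  shows "chol_rest M (Suc a) p a = 0"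
proof -
  have P: "positive_op (chol_rest M a)" by (rule positive_op_chol_rest[OF M])
  show ?thesis
  proof (cases "0 < Re (chol_rest M a a a)")
    case True
    then show ?thesis
      using positive_op_diag_nonneg[OF P, of a]
      by (simp add: chol_rest.simps(2) complex_nonneg_iff complex_eq_iff)
  next
    case False
    then have "chol_rest M a a a = 0"
      using positive_op_diag_nonneg[OF P, of a] by (simp add: complex_nonneg_iff complex_eq_iff)
    then show ?thesis using False positive_op_column_zero[OF P] by (simp add: chol_rest.simps(2))
  qed
qed

lemma chol_rest_zero:
  assumes M: "positive_op M" and "p < a \<or> q < a"
  shows "chol_rest M a p q = 0"
  using assms(2)
proof (induction a arbitrary: p q)
  case (Suc a)
  have col: "chol_col M a x = 0" if "x < a" for x
    unfolding chol_col_def using Suc.IH[of x a] that by simp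
  show ?case
  proof (cases "p < a \<or> q < a")
    case True
    then show ?thesis using Suc.IH col by (auto simp: chol_rest_Suc)
  next
    case False
    then have "p = a \<or> q = a" using Suc.prems by auto
    then show ?thesis
      using chol_rest_Suc_column_zero[OF M, of a] positive_op_hermitian[OF positive_op_chol_rest[OF M]]
      by (metis complex_cnj_zero)
  qed
qed simp

lemma chol_col_zero: "positive_op M \<Longrightarrow> p < a \<Longrightarrow> chol_col M a p = 0"
  unfolding chol_col_def using chol_rest_zero[of M p a a] by simp

theorem has_sum_cholesky:
  assumes M: "positive_op M"
  shows "((\<lambda>\<alpha>. chol_col M \<alpha> p * cnj (chol_col M \<alpha> q)) has_sum M p q) UNIV"
proof (rule has_sum_finite_neutralI[of "{..max p q}"])
  show "M p q = (\<Sum>\<alpha>\<le>max p q. chol_col M \<alpha> p * cnj (chol_col M \<alpha> q))"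
    using chol_rest_decomp[of M p q "Suc (max p q)"] chol_rest_zero[OF M, of p "Suc (max p q)" q]
    by (simp add: lessThan_Suc_atMost less_Suc_eq_le)
qed (use chol_col_zero[OF M] in auto)

section \<open>Matrix units and a density argument\<close>

definition unit_mat :: "nat \<Rightarrow> nat \<Rightarrow> mat" where
  "unit_mat p q = (\<lambda>i j. if i = p \<and> j = q then 1 else 0)"

lemma trace_class_square_support:
  assumes supp: "\<And>i j. A i j \<noteq> 0 \<Longrightarrow> i < N \<and> j < N"
  shows "trace_class A"
proof -
  define P :: mat where "P = (\<lambda>i j. if i = j \<and> j < N then 1 else 0)"
  have "finite {(i,j). A i j \<noteq> 0}"
    by (rule finite_subset[of _ "{..<N} \<times> {..<N}"]) (use supp in auto)
  moreover have "finite {(i,j). P i j \<noteq> 0}"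
    by (rule finite_subset[of _ "{..<N} \<times> {..<N}"]) (auto simp: P_def)
  moreover have "mat_mult A P = A"
  proof (intro ext)
    fix i j
    have "mat_mult A P i j = A i j * P j j"
      unfolding mat_mult_def by (rule infsum_eq_single) (simp add: P_def)
    then show "mat_mult A P i j = A i j" using supp[of i j] by (auto simp: P_def)
  qed
  ultimately show ?thesis
    unfolding trace_class_def by (metis hilbert_schmidt_finite_support)
qed

lemma trace_class_unit_mat: "trace_class (unit_mat p q)"
  by (rule trace_class_square_support[of _ "Suc (max p q)"]) (auto simp: unit_mat_def split: if_splits)

lemma hilbert_schmidt_unit_mat: "hilbert_schmidt (unit_mat p q)"
  and hs_norm2_unit_mat: "hs_norm2 (unit_mat p q) = 1"
proof -
  have "((\<lambda>(i,j). (cmod (unit_mat p q i j))\<^sup>2) has_sum 1) UNIV"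
    using has_sum_eq_single[where f = "\<lambda>(i,j). (cmod (unit_mat p q i j))\<^sup>2" and a = "(p,q)"]
    by (auto simp: unit_mat_def)
  then show "hilbert_schmidt (unit_mat p q)" "hs_norm2 (unit_mat p q) = 1"
    unfolding hilbert_schmidt_def hs_norm2_def by (auto simp: has_sum_iff)
qed

lemma unit_mat_mult: "mat_mult (unit_mat p r) (unit_mat r q) = unit_mat p q"
  unfolding mat_mult_def by (intro ext, subst infsum_eq_single[where a = r]) (auto simp: unit_mat_def)

lemma mat_adj_unit_mat: "mat_adj (unit_mat p q) = unit_mat q p"
  by (intro ext) (auto simp: mat_adj_def unit_mat_def)

lemma mat_trace_unit_mat: "mat_trace (unit_mat n n) = 1"
  unfolding mat_trace_def by (subst infsum_eq_single[where a = n]) (auto simp: unit_mat_def)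

lemma positive_block_unit_mats: "positive_block N (\<lambda>i j. unit_mat i j)"
  using positive_block_gram[of "\<lambda>i. unit_mat 0 i" N] hilbert_schmidt_unit_mat
  by (simp add: mat_adj_unit_mat unit_mat_mult)

lemma positive_op_unit_mat: "positive_op (unit_mat n n)"
  using positive_op_if_positive_block_1[OF positive_block_gram[of "\<lambda>_. unit_mat 0 n" 1]]
    hilbert_schmidt_unit_mat by (simp add: mat_adj_unit_mat unit_mat_mult)

definition tc_linear :: "(mat \<Rightarrow> complex) \<Rightarrow> bool" where
  "tc_linear L \<longleftrightarrow> (\<forall>A B a b. trace_class A \<longrightarrow> trace_class B \<longrightarrow>
     L (mat_add (mat_scale a A) (mat_scale b B)) = a * L A + b * L B)"

lemma tc_linear_add:
  assumes "tc_linear L" "trace_class A" "trace_class B"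
  shows "L (\<lambda>i j. A i j + B i j) = L A + L B"
  using assms(1)[unfolded tc_linear_def, rule_format, OF assms(2,3), of 1 1]
  by (simp add: mat_add_def mat_scale_def)

lemma tc_linear_diff: "tc_linear L1 \<Longrightarrow> tc_linear L2 \<Longrightarrow> tc_linear (\<lambda>X. L1 X - L2 X)"
  unfolding tc_linear_def by (simp add: algebra_simps)

lemma tc_linear_unit_mats_sum:
  assumes L: "tc_linear L" and units: "\<And>p q. L (unit_mat p q) = 0"
    and S: "finite S" "S \<subseteq> {..<N} \<times> {..<N}"
  shows "L (\<lambda>i j. \<Sum>x\<in>S. a x * unit_mat (fst x) (snd x) i j) = 0"
  using S
proof (induction S rule: finite_induct)
  case empty
  have "trace_class (\<lambda>_ _. 0)" by (rule trace_class_square_support) simp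
  then show ?case using tc_linear_add[OF L, of "\<lambda>_ _. 0" "\<lambda>_ _. 0"] by simp
next
  case (insert x S)
  define M where "M = (\<lambda>i j. \<Sum>y\<in>S. a y * unit_mat (fst y) (snd y) i j)"
  have "trace_class M"
  proof (rule trace_class_square_support)
    fix i j assume "M i j \<noteq> 0"
    then obtain y where "y \<in> S" "a y * unit_mat (fst y) (snd y) i j \<noteq> 0"
      unfolding M_def by (meson sum.neutral)
    then show "i < N \<and> j < N" using insert.prems by (auto simp: unit_mat_def split: if_splits)
  qed
  moreover have "(\<lambda>i j. \<Sum>y\<in>insert x S. a y * unit_mat (fst y) (snd y) i j)
      = mat_add (mat_scale (a x) (unit_mat (fst x) (snd x))) (mat_scale 1 M)"
    using insert.hyps by (simp add: M_def mat_add_def mat_scale_def)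
  ultimately show ?case
    using L[unfolded tc_linear_def, rule_format, OF trace_class_unit_mat] insert units
    by (simp add: M_def)
qed

lemma tc_linear_square_support_zero:
  assumes L: "tc_linear L" and units: "\<And>p q. L (unit_mat p q) = 0"
    and supp: "\<And>i j. A i j \<noteq> 0 \<Longrightarrow> i < N \<and> j < N"
  shows "L A = 0"
proof -
  have "A = (\<lambda>i j. \<Sum>x\<in>{..<N} \<times> {..<N}. A (fst x) (snd x) * unit_mat (fst x) (snd x) i j)"
  proof (intro ext)
    fix i j
    have "(\<Sum>x\<in>{..<N} \<times> {..<N}. A (fst x) (snd x) * unit_mat (fst x) (snd x) i j)
        = (\<Sum>x\<in>{..<N} \<times> {..<N}. if x = (i,j) then A i j else 0)"
      by (rule sum.cong) (auto simp: unit_mat_def)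
    also have "\<dots> = (if (i,j) \<in> {..<N} \<times> {..<N} then A i j else 0)"
      by (rule sum.delta) simp
    finally show "A i j = (\<Sum>x\<in>{..<N} \<times> {..<N}. A (fst x) (snd x) * unit_mat (fst x) (snd x) i j)"
      using supp[of i j] by auto
  qed
  moreover have "L (\<lambda>i j. \<Sum>x\<in>{..<N} \<times> {..<N}. A (fst x) (snd x) * unit_mat (fst x) (snd x) i j) = 0"
    by (rule tc_linear_unit_mats_sum[OF L units]) auto
  ultimately show ?thesis by simp
qed

lemma mat_mult_trunc_support:
  assumes "mat_mult (trunc_mat N B) (trunc_mat N C) i j \<noteq> 0"
  shows "i < N \<and> j < N"
proof (rule ccontr)
  assume "\<not> (i < N \<and> j < N)"
  then have "trunc_mat N B i p * trunc_mat N C p j = 0" for p by (auto simp: trunc_mat_def)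
  then have "mat_mult (trunc_mat N B) (trunc_mat N C) i j = (\<Sum>\<^sub>\<infinity>p::nat. 0)"
    unfolding mat_mult_def by (intro infsum_cong)
  then show False using assms by simp
qed

text \<open>Cutting both factors of \<open>X = BC\<close> to the corner \<open>{..<N}\<^sup>2\<close> leaves a combination of
  matrix units plus two error terms that tend to zero.\<close>
lemma tc_linear_eq_zero_if_bounded:
  assumes L: "tc_linear D" and units: "\<And>p q. D (unit_mat p q) = 0"
    and K: "0 \<le> K"
    and bound: "\<And>B C. hilbert_schmidt B \<Longrightarrow> hilbert_schmidt C \<Longrightarrow>
                  cmod (D (mat_mult B C)) \<le> K * sqrt (hs_norm2 B * hs_norm2 C)"
    and X: "trace_class X"
  shows "D X = 0"
proof -
  obtain B C where B: "hilbert_schmidt B" and C: "hilbert_schmidt C" and XBC: "X = mat_mult B C"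
    using X unfolding trace_class_def by blast
  define g where "g N = K * sqrt (hs_norm2 (tail_mat N B) * hs_norm2 C)
    + K * sqrt (hs_norm2 B * hs_norm2 (tail_mat N C))" for N
  have "cmod (D X) \<le> g N" for N
  proof -
    let ?B1 = "trunc_mat N B" and ?B2 = "tail_mat N B" and ?C1 = "trunc_mat N C" and ?C2 = "tail_mat N C"
    note hs = hilbert_schmidt_trunc(1)[OF B] hilbert_schmidt_tail[OF B]
      hilbert_schmidt_trunc(1)[OF C] hilbert_schmidt_tail[OF C]
    have "D X = D (mat_mult ?B2 C) + D (mat_mult ?B1 C)"
      unfolding XBC
      by (subst tail_plus_trunc[of B N], subst mat_mult_add_left[OF hs(2,1) C])
        (intro tc_linear_add[OF L] trace_class_mat_mult hs C)
    moreover have "D (mat_mult ?B1 C) = D (mat_mult ?B1 ?C2) + D (mat_mult ?B1 ?C1)"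
      by (subst tail_plus_trunc[of C N], subst mat_mult_add_right[OF hs(1,4,3)])
        (intro tc_linear_add[OF L] trace_class_mat_mult hs)
    moreover have "D (mat_mult ?B1 ?C1) = 0"
      by (rule tc_linear_square_support_zero[OF L units mat_mult_trunc_support])
    ultimately have "D X = D (mat_mult ?B2 C) + D (mat_mult ?B1 ?C2)"
      by simp
    then have "cmod (D X) \<le> cmod (D (mat_mult ?B2 C)) + cmod (D (mat_mult ?B1 ?C2))"
      by (simp only: norm_triangle_ineq)
    also have "\<dots> \<le> K * sqrt (hs_norm2 ?B2 * hs_norm2 C) + K * sqrt (hs_norm2 ?B1 * hs_norm2 ?C2)"
      by (intro add_mono bound hs C)
    also have "\<dots> \<le> g N"
      unfolding g_def using K hilbert_schmidt_trunc(2)[OF B] hs_norm2_nonneg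
      by (intro add_left_mono mult_left_mono real_sqrt_le_mono mult_right_mono) auto
    finally show ?thesis .
  qed
  moreover have "g \<longlonglongrightarrow> K * sqrt (0 * hs_norm2 C) + K * sqrt (hs_norm2 B * 0)"
    unfolding g_def
    by (intro tendsto_intros tendsto_hs_norm2_tail B C)
  ultimately have "cmod (D X) \<le> 0"
    by (intro LIMSEQ_le_const) auto
  then show ?thesis by simp
qed

section \<open>Operations and their sector matrices\<close>

lemma double_sum_delta:
  assumes "finite F" "m \<in> F" "n \<in> F"
  shows "(\<Sum>p\<in>F. \<Sum>q\<in>F. cnj (if p = m then x else 0) * A p q * (if q = n then y else 0))
    = cnj x * A m n * y"
proof -
  have "(\<Sum>p\<in>F. \<Sum>q\<in>F. cnj (if p = m then x else 0) * A p q * (if q = n then y else 0))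
      = (\<Sum>p\<in>F. if p = m then (\<Sum>q\<in>F. if q = n then cnj x * A p q * y else 0) else 0)"
    by (rule sum.cong) (auto intro: sum.cong)
  also have "\<dots> = cnj x * A m n * y" using assms by (simp add: sum.delta')
  finally show ?thesis .
qed

definition sector_mat :: "(mat \<Rightarrow> mat) \<Rightarrow> int \<Rightarrow> mat" where
  "sector_mat E k = (\<lambda>p q. if 0 \<le> int p + k \<and> 0 \<le> int q + k
     then E (unit_mat p q) (nat (int p + k)) (nat (int q + k)) else 0)"

locale quantum_operation =
  fixes E :: "mat \<Rightarrow> mat"
  assumes operation: "operation E"
begin

lemma trace_class_E: "trace_class X \<Longrightarrow> trace_class (E X)"
  using operation unfolding operation_def by blast

lemma E_linear: "trace_class A \<Longrightarrow> trace_class B \<Longrightarrow>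
   E (mat_add (mat_scale a A) (mat_scale b B)) = mat_add (mat_scale a (E A)) (mat_scale b (E B))"
  using operation unfolding operation_def by blast

lemma E_positive_block:
  "(\<And>i j. trace_class (X i j)) \<Longrightarrow> positive_block N X \<Longrightarrow> positive_block N (\<lambda>i j. E (X i j))"
  using operation unfolding operation_def by blast

lemma E_trace_le: "trace_class X \<Longrightarrow> positive_op X \<Longrightarrow> Re (mat_trace (E X)) \<le> Re (mat_trace X)"
  using operation unfolding operation_def by blast

lemma E_scale: "trace_class A \<Longrightarrow> E (mat_scale a A) = mat_scale a (E A)"
  using E_linear[of A A a 0] by (simp add: mat_add_def mat_scale_def)

lemma E_gram_diag_le:
  assumes Z: "hilbert_schmidt Z"
  shows "Re (E (mat_mult (mat_adj Z) Z) m m) \<le> hs_norm2 Z"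
proof -
  let ?P = "mat_mult (mat_adj Z) Z"
  have tcP: "trace_class ?P" by (rule trace_class_mat_mult[OF hilbert_schmidt_adj[OF Z] Z])
  have blk: "positive_block 1 (\<lambda>_ _. ?P)" using positive_block_gram[of "\<lambda>_. Z" 1] Z by simp
  have posEP: "positive_op (E ?P)"
    using positive_op_if_positive_block_1 E_positive_block[of "\<lambda>_ _. ?P" 1] tcP blk by simp
  have trP: "Re (mat_trace ?P) = hs_norm2 Z"
    using gram_diag_has_sum[OF Z] unfolding mat_trace_def by (simp add: infsumI)
  have tcEP: "trace_class (E ?P)" by (rule trace_class_E[OF tcP])
  have "Re (E ?P m m) \<le> (\<Sum>\<^sub>\<infinity>i. Re (E ?P i i))"
    using finite_sum_le_infsum[OF summable_on_Re[OF trace_class_diag_summable[OF tcEP]], of "{m}"]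
      positive_op_diag_nonneg[OF posEP] by (simp add: complex_nonneg_iff)
  also have "\<dots> = Re (mat_trace (E ?P))"
    unfolding mat_trace_def by (rule infsum_Re[OF trace_class_diag_summable[OF tcEP]])
  also have "\<dots> \<le> Re (mat_trace ?P)"
    by (rule E_trace_le[OF tcP positive_op_if_positive_block_1[OF blk]])
  finally show ?thesis using trP by simp
qed

text \<open>Complete positivity applied to the Gram block of \<open>(B\<^sup>\<dagger>, C)\<close> makes the \<open>2 \<times> 2\<close> matrix
  with off-diagonal entry \<open>E(BC)\<^sub>m\<^sub>n\<close> positive; its diagonal is controlled by
  \<open>E_gram_diag_le\<close>.\<close>
lemma norm_E_mult_le:
  assumes B: "hilbert_schmidt B" and C: "hilbert_schmidt C"
  shows "cmod (E (mat_mult B C) m n) \<le> sqrt (hs_norm2 B * hs_norm2 C)"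
proof -
  define Z where "Z i = (if i = 0 then mat_adj B else C)" for i :: nat
  have Z: "hilbert_schmidt (Z i)" for i unfolding Z_def using hilbert_schmidt_adj[OF B] C by simp
  let ?X = "\<lambda>i j. mat_mult (mat_adj (Z i)) (Z j)"
  have PB: "positive_block 2 (\<lambda>i j. E (?X i j))"
    using E_positive_block[OF trace_class_mat_mult[OF hilbert_schmidt_adj[OF Z] Z] positive_block_gram[OF Z]] .
  define a b c d where "a = E (?X 0 0) m m" and "b = E (?X 0 1) m n"
    and "c = E (?X 1 0) n m" and "d = E (?X 1 1) n n"
  have "0 \<le> cnj x * a * x + cnj x * b * y + cnj y * c * x + cnj y * d * y" for x y
  proof -
    define v where "v i p = (if p = (if i = 0 then m else n) then (if i = 0 then x else y) else 0)"
      for i p :: nat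
    have "0 \<le> (\<Sum>i<2. \<Sum>j<2. \<Sum>p\<in>{m,n}. \<Sum>q\<in>{m,n}. cnj (v i p) * E (?X i j) p q * v j q)"
      using PB[unfolded positive_block_iff, rule_format, of "{m,n}" v] by simp
    also have "\<dots> = (\<Sum>i<2. \<Sum>j<2. cnj (if i = 0 then x else y) * E (?X i j)
        (if i = 0 then m else n) (if j = 0 then m else n) * (if j = 0 then x else y))"
      unfolding v_def by (rule sum.cong[OF refl], rule sum.cong[OF refl], subst double_sum_delta) auto
    also have "\<dots> = cnj x * a * x + cnj x * b * y + cnj y * c * x + cnj y * d * y"
      by (simp add: numeral_2_eq_2 a_def b_def c_def d_def)
    finally show ?thesis .
  qed
  note form = nonneg_form_2x2[OF this]
  have "Re a \<le> hs_norm2 B"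
    using E_gram_diag_le[OF hilbert_schmidt_adj[OF B]] hs_norm2_adj[OF B] by (simp add: a_def Z_def)
  moreover have "Re d \<le> hs_norm2 C" using E_gram_diag_le[OF C] by (simp add: d_def Z_def)
  moreover have "0 \<le> Re a" "0 \<le> Re d" using form(2,3) by (simp_all add: complex_nonneg_iff)
  ultimately have "Re a * Re d \<le> hs_norm2 B * hs_norm2 C"
    by (intro mult_mono) (simp_all add: hs_norm2_nonneg)
  moreover have "b = E (mat_mult B C) m n" by (simp add: b_def Z_def)
  ultimately have "(cmod (E (mat_mult B C) m n))\<^sup>2 \<le> hs_norm2 B * hs_norm2 C"
    using form(4) by simp
  then show ?thesis by (rule real_le_rsqrt)
qed

text \<open>Complete positivity on the block \<open>(|i\<rangle>\<langle>j|)\<^sub>i\<^sub>,\<^sub>j\<^sub><\<^sub>N\<close>, tested at vectors whose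
  \<open>i\<close>-th component is concentrated at \<open>i + k\<close>.\<close>
lemma positive_op_sector_mat: "positive_op (sector_mat E k)"
  unfolding positive_op_iff
proof (intro allI impI)
  fix F :: "nat set" and v :: "nat \<Rightarrow> complex" assume F: "finite F"
  obtain N where N: "F \<subseteq> {..<N}" using finite_nat_bounded[OF F] by blast
  define F0 where "F0 = {p \<in> F. 0 \<le> int p + k}"
  define v0 where "v0 i = (if i \<in> F0 then v i else 0)" for i
  define G where "G = (\<lambda>p. nat (int p + k)) ` F0"
  define w where "w i b = (if b = nat (int i + k) then v0 i else 0)" for i b
  have G: "finite G" unfolding G_def F0_def using F by simp
  have PB: "positive_block N (\<lambda>i j. E (unit_mat i j))"
    by (rule E_positive_block[OF trace_class_unit_mat positive_block_unit_mats])
  have inner: "(\<Sum>p\<in>G. \<Sum>q\<in>G. cnj (w i p) * E (unit_mat i j) p q * w j q)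
      = cnj (v0 i) * E (unit_mat i j) (nat (int i + k)) (nat (int j + k)) * v0 j" for i j
  proof (cases "i \<in> F0 \<and> j \<in> F0")
    case True
    then have "nat (int i + k) \<in> G" "nat (int j + k) \<in> G" unfolding G_def by auto
    then show ?thesis unfolding w_def by (rule double_sum_delta[OF G])
  next
    case False
    then have "(\<forall>p. w i p = 0) \<and> v0 i = 0 \<or> (\<forall>q. w j q = 0) \<and> v0 j = 0"
      by (auto simp: w_def v0_def)
    then show ?thesis by auto
  qed
  have "0 \<le> (\<Sum>i<N. \<Sum>j<N. \<Sum>p\<in>G. \<Sum>q\<in>G. cnj (w i p) * E (unit_mat i j) p q * w j q)"
    using PB[unfolded positive_block_iff, rule_format, OF G] by simp
  also have "\<dots> = (\<Sum>i<N. \<Sum>j<N. cnj (v0 i) * E (unit_mat i j) (nat (int i + k)) (nat (int j + k)) * v0 j)"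
    unfolding inner ..
  also have "\<dots> = (\<Sum>i\<in>F. \<Sum>j\<in>F. cnj (v0 i) * E (unit_mat i j) (nat (int i + k)) (nat (int j + k)) * v0 j)"
    by (intro sum.mono_neutral_cong_right sum.mono_neutral_right) (use N F in \<open>auto simp: v0_def F0_def\<close>)
  also have "\<dots> = sesq_form (sector_mat E k) F v v"
    unfolding sesq_form_def by (intro sum.cong refl) (auto simp: v0_def F0_def sector_mat_def)
  finally show "0 \<le> sesq_form (sector_mat E k) F v v" .
qed

lemma sector_mat_diag_le: "Re (sector_mat E k p p) \<le> 1"
proof -
  have "cmod (E (unit_mat p p) i i) \<le> 1" for i
    using norm_E_mult_le[OF hilbert_schmidt_unit_mat hilbert_schmidt_unit_mat, of p p p p i i]
    by (simp add: unit_mat_mult hs_norm2_unit_mat)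
  then show ?thesis
    by (simp add: sector_mat_def) (meson complex_Re_le_cmod order_trans)
qed

end

section \<open>Shift-diagonal Kraus series\<close>

definition kraus_entry :: "(int \<times> nat \<Rightarrow> nat \<Rightarrow> complex) \<Rightarrow> mat \<Rightarrow> nat \<Rightarrow> nat \<Rightarrow> int \<times> nat \<Rightarrow> complex" where
  "kraus_entry c X m n = (\<lambda>(k, \<alpha>). kraus_term (mat_mult (shift_op k) (diag_op (c (k, \<alpha>)))) X m n)"

lemma kraus_term_shift_diag:
  "kraus_term (mat_mult (shift_op k) (diag_op c)) X m n =
    (if k \<le> int m \<and> k \<le> int n
     then c (nat (int m - k)) * X (nat (int m - k)) (nat (int n - k)) * cnj (c (nat (int n - k)))
     else 0)"
proof -
  define K where "K = (\<lambda>i j. if int i = int j + k then c j else (0::complex))"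
  have SD: "mat_mult (shift_op k) (diag_op c) = K"
    unfolding mat_mult_def K_def
    by (intro ext, subst infsum_eq_single) (auto simp: shift_op_def diag_op_def)
  have KX: "mat_mult K X m j = (if k \<le> int m then c (nat (int m - k)) * X (nat (int m - k)) j else 0)" for j
    unfolding mat_mult_def K_def by (subst infsum_eq_single[where a = "nat (int m - k)"]) auto
  show ?thesis
    unfolding kraus_term_def SD mat_mult_def[of "mat_mult K X"] mat_adj_def KX
    by (subst infsum_eq_single[where a = "nat (int n - k)"]) (auto simp: K_def)
qed

lemma kraus_entry_eq:
  "kraus_entry c X m n (k, \<alpha>) =
    (if k \<le> int m \<and> k \<le> int n
     then c (k, \<alpha>) (nat (int m - k)) * X (nat (int m - k)) (nat (int n - k)) * cnj (c (k, \<alpha>) (nat (int n - k)))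
     else 0)"
  unfolding kraus_entry_def by (simp add: kraus_term_shift_diag)

definition kraus_coeffs_bounded :: "(int \<times> nat \<Rightarrow> nat \<Rightarrow> complex) \<Rightarrow> bool" where
  "kraus_coeffs_bounded c \<longleftrightarrow> (\<forall>k p A. finite A \<longrightarrow> (\<Sum>\<alpha>\<in>A. (cmod (c (k, \<alpha>) p))\<^sup>2) \<le> 1)"

lemma kraus_entry_linear:
  "kraus_entry c (mat_add (mat_scale a A) (mat_scale b B)) m n x
     = a * kraus_entry c A m n x + b * kraus_entry c B m n x"
  by (cases x) (simp add: kraus_entry_eq mat_add_def mat_scale_def algebra_simps)

text \<open>Distinct shifts \<open>k\<close> select distinct rows of \<open>B\<close> and distinct columns of \<open>C\<close>.\<close>
lemma sum_diagonal_mat_mult_le: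
  fixes K :: "int set"
  assumes B: "hilbert_schmidt B" and C: "hilbert_schmidt C" and t: "t > 0"
    and K: "finite K" "K \<subseteq> {k. k \<le> int m \<and> k \<le> int n}"
  shows "(\<Sum>k\<in>K. cmod (mat_mult B C (nat (int m - k)) (nat (int n - k))))
    \<le> (t\<^sup>2 * hs_norm2 B + hs_norm2 C / t\<^sup>2) / 2"
proof -
  have rows: "(\<Sum>k\<in>K. row_norm2 A (nat (int l - k))) \<le> hs_norm2 A"
    if A: "hilbert_schmidt A" and l: "K \<subseteq> {k. k \<le> int l}" for A l
  proof -
    have "inj_on (\<lambda>k. nat (int l - k)) K"
    proof (rule inj_onI)
      fix x y assume "x \<in> K" "y \<in> K" "nat (int l - x) = nat (int l - y)"
      then show "x = y" using l by (auto simp: subset_iff eq_nat_nat_iff)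
    qed
    then have "(\<Sum>k\<in>K. row_norm2 A (nat (int l - k))) = sum (row_norm2 A) ((\<lambda>k. nat (int l - k)) ` K)"
      by (simp add: sum.reindex)
    also have "\<dots> \<le> hs_norm2 A" using K(1) by (intro sum_row_norm2_le A) simp
    finally show ?thesis .
  qed
  have "(\<Sum>k\<in>K. cmod (mat_mult B C (nat (int m - k)) (nat (int n - k))))
      \<le> (\<Sum>k\<in>K. (t\<^sup>2 * row_norm2 B (nat (int m - k)) + row_norm2 (mat_adj C) (nat (int n - k)) / t\<^sup>2) / 2)"
    by (intro sum_mono mat_mult_entry_bound(2) B C t)
  also have "\<dots> = (t\<^sup>2 * (\<Sum>k\<in>K. row_norm2 B (nat (int m - k)))
      + (\<Sum>k\<in>K. row_norm2 (mat_adj C) (nat (int n - k))) / t\<^sup>2) / 2"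
    by (simp add: sum_divide_distrib[symmetric] sum.distrib sum_distrib_left)
  also have "\<dots> \<le> (t\<^sup>2 * hs_norm2 B + hs_norm2 (mat_adj C) / t\<^sup>2) / 2"
    using rows[OF B, of m] rows[OF hilbert_schmidt_adj[OF C], of n] K(2)
    by (intro divide_right_mono add_mono mult_left_mono divide_right_mono) auto
  finally show ?thesis by (simp add: hs_norm2_adj[OF C])
qed

lemma sum_norm_kraus_entry_le:
  assumes c: "kraus_coeffs_bounded c" and A: "finite A"
  shows "(\<Sum>\<alpha>\<in>A. norm (kraus_entry c X m n (k, \<alpha>)))
    \<le> (if k \<le> int m \<and> k \<le> int n then cmod (X (nat (int m - k)) (nat (int n - k))) else 0)"
proof (cases "k \<le> int m \<and> k \<le> int n")
  case True
  define p q x where "p = nat (int m - k)" and "q = nat (int n - k)" and "x = cmod (X p q)"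
  have "(\<Sum>\<alpha>\<in>A. norm (kraus_entry c X m n (k, \<alpha>))) = (\<Sum>\<alpha>\<in>A. x * (cmod (c (k, \<alpha>) p) * cmod (c (k, \<alpha>) q)))"
    using True by (simp add: kraus_entry_eq norm_mult mult_ac p_def q_def x_def)
  also have "\<dots> \<le> (\<Sum>\<alpha>\<in>A. x * (((cmod (c (k, \<alpha>) p))\<^sup>2 + (cmod (c (k, \<alpha>) q))\<^sup>2) / 2))"
    using mult_le_weighted_amgm[of 1] by (intro sum_mono mult_left_mono) (auto simp: x_def)
  also have "\<dots> = x * (((\<Sum>\<alpha>\<in>A. (cmod (c (k, \<alpha>) p))\<^sup>2) + (\<Sum>\<alpha>\<in>A. (cmod (c (k, \<alpha>) q))\<^sup>2)) / 2)"
    by (simp add: sum_distrib_left sum_divide_distrib sum.distrib add_divide_distrib distrib_left)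
  also have "\<dots> \<le> x"
  proof -
    have "(\<Sum>\<alpha>\<in>A. (cmod (c (k, \<alpha>) p))\<^sup>2) \<le> 1" "(\<Sum>\<alpha>\<in>A. (cmod (c (k, \<alpha>) q))\<^sup>2) \<le> 1"
      using c A unfolding kraus_coeffs_bounded_def by blast+
    then show ?thesis by (intro mult_left_le) (auto simp: x_def)
  qed
  finally show ?thesis using True by (simp add: p_def q_def x_def)
qed (auto simp: kraus_entry_eq)

lemma sum_norm_kraus_entry_mat_mult_le:
  assumes c: "kraus_coeffs_bounded c"
    and B: "hilbert_schmidt B" and C: "hilbert_schmidt C" and t: "t > 0" and S: "finite S"
  shows "(\<Sum>x\<in>S. norm (kraus_entry c (mat_mult B C) m n x)) \<le> (t\<^sup>2 * hs_norm2 B + hs_norm2 C / t\<^sup>2) / 2"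
proof -
  let ?X = "mat_mult B C"
  define K where "K = fst ` S"
  define A where "A = snd ` S"
  have KA: "finite K" "finite A" "S \<subseteq> K \<times> A" using S by (force simp: K_def A_def)+
  have "(\<Sum>x\<in>S. norm (kraus_entry c ?X m n x)) \<le> (\<Sum>x\<in>K \<times> A. norm (kraus_entry c ?X m n x))"
    by (rule sum_mono2) (use KA in auto)
  also have "\<dots> = (\<Sum>k\<in>K. \<Sum>\<alpha>\<in>A. norm (kraus_entry c ?X m n (k, \<alpha>)))"
    by (simp add: sum.cartesian_product)
  also have "\<dots> \<le> (\<Sum>k\<in>K. if k \<le> int m \<and> k \<le> int n then cmod (?X (nat (int m - k)) (nat (int n - k))) else 0)"
    by (intro sum_mono sum_norm_kraus_entry_le c KA)
  also have "\<dots> = (\<Sum>k\<in>{k\<in>K. k \<le> int m \<and> k \<le> int n}. cmod (?X (nat (int m - k)) (nat (int n - k))))"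
    using KA by (simp add: sum.inter_filter)
  also have "\<dots> \<le> (t\<^sup>2 * hs_norm2 B + hs_norm2 C / t\<^sup>2) / 2"
    using KA by (intro sum_diagonal_mat_mult_le B C t) auto
  finally show ?thesis .
qed

lemma kraus_entry_mat_mult_bound:
  assumes c: "kraus_coeffs_bounded c"
    and B: "hilbert_schmidt B" and C: "hilbert_schmidt C"
  shows "(\<lambda>x. norm (kraus_entry c (mat_mult B C) m n x)) summable_on UNIV"
    and "cmod (\<Sum>\<^sub>\<infinity>x. kraus_entry c (mat_mult B C) m n x) \<le> sqrt (hs_norm2 B * hs_norm2 C)"
proof -
  show sm: "(\<lambda>x. norm (kraus_entry c (mat_mult B C) m n x)) summable_on UNIV"
    by (rule nonneg_bdd_above_summable_on)
      (auto intro!: bdd_aboveI sum_norm_kraus_entry_mat_mult_le[OF c B C, of 1])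
  have "cmod (\<Sum>\<^sub>\<infinity>x. kraus_entry c (mat_mult B C) m n x) \<le> (\<Sum>\<^sub>\<infinity>x. norm (kraus_entry c (mat_mult B C) m n x))"
    by (rule norm_infsum_bound[OF sm])
  also have "\<dots> \<le> sqrt (hs_norm2 B * hs_norm2 C)"
    by (intro le_sqrt_mult_if_le_weighted_means hs_norm2_nonneg infsum_le_finite_sums[OF sm]
        sum_norm_kraus_entry_mat_mult_le[OF c B C])
  finally show "cmod (\<Sum>\<^sub>\<infinity>x. kraus_entry c (mat_mult B C) m n x) \<le> sqrt (hs_norm2 B * hs_norm2 C)" .
qed

lemma kraus_entry_summable:
  assumes c: "kraus_coeffs_bounded c" and X: "trace_class X"
  shows "kraus_entry c X m n summable_on UNIV"
proof -
  obtain B C where "hilbert_schmidt B" "hilbert_schmidt C" "X = mat_mult B C"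
    using X unfolding trace_class_def by blast
  then show ?thesis using abs_summable_summable kraus_entry_mat_mult_bound(1)[OF c] by blast
qed

lemma tc_linear_kraus_sum:
  assumes c: "kraus_coeffs_bounded c"
  shows "tc_linear (\<lambda>X. \<Sum>\<^sub>\<infinity>x. kraus_entry c X m n x)"
  unfolding tc_linear_def kraus_entry_linear
  by (simp add: infsum_add summable_on_cmult_right kraus_entry_summable[OF c] infsum_cmult_right)

section \<open>U(1)-invariant operations\<close>

definition kraus_coeff :: "(mat \<Rightarrow> mat) \<Rightarrow> int \<times> nat \<Rightarrow> nat \<Rightarrow> complex" where
  "kraus_coeff E = (\<lambda>(k, \<alpha>). chol_col (sector_mat E k) \<alpha>)"

context quantum_operation
begin

lemma tc_linear_E_entry: "tc_linear (\<lambda>X. E X m n)"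
  unfolding tc_linear_def using E_linear by (simp add: mat_add_def mat_scale_def)

lemma kraus_coeff_sq_has_sum:
  "((\<lambda>\<alpha>. (cmod (kraus_coeff E (k, \<alpha>) p))\<^sup>2) has_sum Re (sector_mat E k p p)) UNIV"
  using has_sum_Re[OF has_sum_cholesky[OF positive_op_sector_mat, of k p p]]
  by (simp add: kraus_coeff_def flip: complex_norm_square)

lemma kraus_coeffs_bounded: "kraus_coeffs_bounded (kraus_coeff E)"
  unfolding kraus_coeffs_bounded_def
proof (intro allI impI)
  fix k p and A :: "nat set" assume "finite A"
  then have "(\<Sum>\<alpha>\<in>A. (cmod (kraus_coeff E (k, \<alpha>) p))\<^sup>2) \<le> Re (sector_mat E k p p)"
    by (intro finite_sum_le_has_sum[OF kraus_coeff_sq_has_sum]) simp_all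
  then show "(\<Sum>\<alpha>\<in>A. (cmod (kraus_coeff E (k, \<alpha>) p))\<^sup>2) \<le> 1"
    using sector_mat_diag_le[of k p] by linarith
qed

lemma kraus_coeff_sq_total:
  "((\<lambda>k\<alpha>. (cmod (kraus_coeff E k\<alpha> n))\<^sup>2) has_sum Re (mat_trace (E (unit_mat n n)))) UNIV"
proof -
  define f where "f x = (cmod (kraus_coeff E x n))\<^sup>2" for x
  define g where "g k = Re (sector_mat E k n n)" for k
  have inner: "((\<lambda>\<alpha>. f (k, \<alpha>)) has_sum g k) UNIV" for k
    unfolding f_def g_def by (rule kraus_coeff_sq_has_sum)
  have tc: "trace_class (E (unit_mat n n))" by (rule trace_class_E[OF trace_class_unit_mat])
  have diag: "((\<lambda>j. Re (E (unit_mat n n) j j)) has_sum Re (mat_trace (E (unit_mat n n)))) UNIV"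
    unfolding mat_trace_def by (rule has_sum_Re[OF has_sum_infsum[OF trace_class_diag_summable[OF tc]]])
  have bij: "bij_betw (\<lambda>j. int j - int n) UNIV {k. - int n \<le> k}"
    by (rule bij_betwI[where g = "\<lambda>k. nat (k + int n)"]) auto
  have "(g has_sum Re (mat_trace (E (unit_mat n n)))) {k. - int n \<le> k}"
    using has_sum_reindex_bij_betw[OF bij, of g] diag by (simp add: g_def sector_mat_def)
  then have g: "(g has_sum Re (mat_trace (E (unit_mat n n)))) UNIV"
    by (rule has_sum_cong_neutral[THEN iffD1, rotated -1]) (auto simp: g_def sector_mat_def)
  have "f summable_on UNIV \<times> UNIV"
    using summable_on_SigmaI[OF inner has_sum_imp_summable[OF g]] by (simp add: f_def[abs_def])
  then have "(f has_sum Re (mat_trace (E (unit_mat n n)))) (UNIV \<times> UNIV)"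
    by (rule has_sum_SigmaI[OF inner g])
  then show ?thesis by (simp add: f_def[abs_def] UNIV_Times_UNIV)
qed

end

locale u1_operation = quantum_operation +
  assumes u1_invariant: "U1_invariant E"
begin

text \<open>If \<open>d = (m - n) - (p - q) \<noteq> 0\<close>, conjugating by \<open>T(\<phi>)\<close> with \<open>\<phi> = \<pi> / |d|\<close>
  multiplies the entry both by \<open>e\<^sup>i\<^sup>\<phi>\<^sup>(\<^sup>p\<^sup>-\<^sup>q\<^sup>)\<close> and by its negative.\<close>
lemma E_unit_mat_eq_zero:
  assumes ne: "int m - int n \<noteq> int p - int q"
  shows "E (unit_mat p q) m n = 0"
proof -
  define d where "d = (int m - int n) - (int p - int q)"
  have d: "d \<noteq> 0" using ne by (simp add: d_def)
  define \<phi> where "\<phi> = pi / real_of_int \<bar>d\<bar>"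
  have "real_of_int \<bar>d\<bar> \<ge> 1" using d by linarith
  then have \<phi>: "0 \<le> \<phi>" "\<phi> < 2 * pi"
    unfolding \<phi>_def using pi_gt_zero by (simp_all add: divide_le_eq divide_less_eq)
  define e where "e = exp (\<i> * complex_of_real (\<phi> * (real p - real q)))"
  have "U1_conj \<phi> (unit_mat p q) = mat_scale e (unit_mat p q)"
    by (intro ext) (auto simp: U1_conj_def mat_scale_def unit_mat_def e_def)
  moreover have "E (U1_conj \<phi> (unit_mat p q)) = U1_conj \<phi> (E (unit_mat p q))"
    using u1_invariant \<phi> trace_class_unit_mat unfolding U1_invariant_def by blast
  ultimately have "mat_scale e (E (unit_mat p q)) = U1_conj \<phi> (E (unit_mat p q))"
    by (simp add: E_scale[OF trace_class_unit_mat])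
  then have eq: "e * E (unit_mat p q) m n = exp (\<i> * complex_of_real (\<phi> * (real m - real n))) * E (unit_mat p q) m n"
    unfolding mat_scale_def U1_conj_def by meson
  have "\<phi> * real_of_int d = pi \<or> \<phi> * real_of_int d = - pi"
    unfolding \<phi>_def using d by (cases "d > 0") auto
  then have "exp (\<i> * complex_of_real (\<phi> * real_of_int d)) = -1"
  proof
    assume "\<phi> * real_of_int d = - pi"
    then show ?thesis by (simp only: of_real_minus mult_minus_right exp_minus exp_pi_i') simp
  qed (simp only: exp_pi_i')
  moreover have "\<phi> * (real m - real n) = \<phi> * (real p - real q) + \<phi> * real_of_int d"
    by (simp add: d_def algebra_simps)
  ultimately have "exp (\<i> * complex_of_real (\<phi> * (real m - real n))) = - e"
    by (simp add: e_def distrib_left exp_add)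
  with eq have "e * E (unit_mat p q) m n = - e * E (unit_mat p q) m n" by (simp only:)
  then show ?thesis by (auto simp: e_def)
qed

lemma infsum_kraus_entry_unit_mat:
  "(\<Sum>\<^sub>\<infinity>x. kraus_entry (kraus_coeff E) (unit_mat p q) m n x) = E (unit_mat p q) m n"
proof (cases "int m - int p = int n - int q")
  case False
  then have "kraus_entry (kraus_coeff E) (unit_mat p q) m n x = 0" for x
    by (cases x) (auto simp: kraus_entry_eq unit_mat_def)
  moreover have "int m - int n \<noteq> int p - int q" using False by linarith
  ultimately show ?thesis using E_unit_mat_eq_zero by simp
next
  case True
  define k0 where "k0 = int m - int p"
  have k0: "k0 \<le> int m" "k0 \<le> int n" "nat (int m - k0) = p" "nat (int n - k0) = q"
    "int p + k0 = int m" "int q + k0 = int n"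
    using True by (auto simp: k0_def)
  have "(kraus_entry (kraus_coeff E) (unit_mat p q) m n has_sum sector_mat E k0 p q) UNIV"
  proof (rule has_sum_slice)
    show "kraus_entry (kraus_coeff E) (unit_mat p q) m n (k, \<alpha>) = 0" if "k \<noteq> k0" for k \<alpha>
      using that True by (auto simp: kraus_entry_eq unit_mat_def k0_def)
    show "((\<lambda>\<alpha>. kraus_entry (kraus_coeff E) (unit_mat p q) m n (k0, \<alpha>)) has_sum sector_mat E k0 p q) UNIV"
      using has_sum_cholesky[OF positive_op_sector_mat, of k0 p q]
      by (simp add: kraus_entry_eq k0 unit_mat_def kraus_coeff_def)
  qed
  moreover have "sector_mat E k0 p q = E (unit_mat p q) m n"
    by (simp add: sector_mat_def k0)
  ultimately show ?thesis by (simp add: infsumI)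
qed

theorem has_sum_kraus_entry:
  assumes X: "trace_class X"
  shows "(kraus_entry (kraus_coeff E) X m n has_sum E X m n) UNIV"
proof -
  define D where "D X = E X m n - (\<Sum>\<^sub>\<infinity>x. kraus_entry (kraus_coeff E) X m n x)" for X
  have "D X = 0"
  proof (rule tc_linear_eq_zero_if_bounded[of D 2])
    show "tc_linear D"
      unfolding D_def by (intro tc_linear_diff tc_linear_E_entry tc_linear_kraus_sum kraus_coeffs_bounded)
    show "D (unit_mat p q) = 0" for p q by (simp add: D_def infsum_kraus_entry_unit_mat)
    show "cmod (D (mat_mult B C)) \<le> 2 * sqrt (hs_norm2 B * hs_norm2 C)"
      if "hilbert_schmidt B" "hilbert_schmidt C" for B C
      using norm_triangle_ineq4[of "E (mat_mult B C) m n" "\<Sum>\<^sub>\<infinity>x. kraus_entry (kraus_coeff E) (mat_mult B C) m n x"]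
        norm_E_mult_le[OF that, of m n]
        kraus_entry_mat_mult_bound(2)[OF kraus_coeffs_bounded that, where m = m and n = n]
      unfolding D_def by linarith
  qed (use X in simp_all)
  then show ?thesis
    using kraus_entry_summable[OF kraus_coeffs_bounded X] by (simp add: D_def has_sum_iff)
qed

end

theorem lemma2:
  fixes E :: "mat \<Rightarrow> mat"
  assumes "operation E" and "U1_invariant E"
  shows "\<exists>c :: int \<times> nat \<Rightarrow> nat \<Rightarrow> complex.
    (\<forall>X. trace_class X \<longrightarrow> (\<forall>m n.
       ((\<lambda>(k, \<alpha>). kraus_term (mat_mult (shift_op k) (diag_op (c (k, \<alpha>)))) X m n)
          has_sum E X m n) UNIV)) \<and>
    (\<forall>n. (\<lambda>k\<alpha>. (cmod (c k\<alpha> n))\<^sup>2) summable_on UNIV \<and>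
         (\<Sum>\<^sub>\<infinity>k\<alpha>. (cmod (c k\<alpha> n))\<^sup>2) \<le> 1) \<and>
    (trace_preserving E \<longrightarrow> (\<forall>n. (\<Sum>\<^sub>\<infinity>k\<alpha>. (cmod (c k\<alpha> n))\<^sup>2) = 1))"
proof -
  interpret u1_operation E
    by (intro u1_operation.intro quantum_operation.intro u1_operation_axioms.intro assms)
  note total = kraus_coeff_sq_total
  have "Re (mat_trace (E (unit_mat n n))) \<le> 1" for n
    using E_trace_le[OF trace_class_unit_mat positive_op_unit_mat] by (simp add: mat_trace_unit_mat)
  moreover have "trace_preserving E \<Longrightarrow> mat_trace (E (unit_mat n n)) = 1" for n
    using trace_class_unit_mat by (simp add: trace_preserving_def mat_trace_unit_mat)
  ultimately show ?thesis
    using has_sum_kraus_entry total[THEN has_sum_imp_summable] total[THEN infsumI]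
    by (intro exI[of _ "kraus_coeff E"]) (auto simp: kraus_entry_def)
qed

end
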